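(* For any non-null classifier $\delta$, any $t\ge0$, any $F$ satisfying the assumptions below, and any $\phi\in(\tfrac12,1]$, the reward $r^*=k_\mu^*(t,F)/\rho(\delta,\phi)$ is a Condorcet winner: for every other reward $r\in\mathbb{R}$, a majority of individuals (a set of measure at least one half) prefers $r^*$ to $r$, where each individual evaluates rewards by the payoff $U_i(\cdot)$ below.
   Context: A unit mass of individuals $i\in[0,1]$ have privately known costs $\gamma_i\in\mathbb{R}$ of choosing $\beta_i=1$ (compliance) rather than $\beta_i=0$, distributed according to a continuously differentiable CDF $F$ with log-concave density $f$ of full support on $\mathbb{R}$. A classifier $\delta=(\delta_1,\delta_0)\in[0,1]^2$ assigns $d_i$ with $\Pr[d_i=s_i\mid s_i]=\delta_{s_i}$, where $\Pr[s_i=\beta_i]=\phi$. Let $\rho=\rho(\delta,\phi)=(\delta_1+\delta_0-1)(2\phi-1)$; $\delta$ is non-null if $\rho\neq0$. Individuals with $d_i=1$ receive reward $r$, financed by an equal tax on all (budget balance), and each gets $t\pi$ with $\pi=F(r\rho)$ the compliance rate (individuals comply iff $\gamma_i\le r\rho$). Individual $i$'s payoff from reward $r$ is $U_i(r)=-\gamma_i+r\rho(1-F(r\rho))+tF(r\rho)$ if $\gamma_i\le r\rho$, and $U_i(r)=-r\rho F(r\rho)+tF(r\rho)$ otherwise. Define $k_0,k_1$ by $k_0=t-\frac{F(k_0)}{f(k_0)}$, $k_1=t+\frac{1-F(k_1)}{f(k_1)}$, and for an individual with cost $\gamma$ let $k^*(\gamma)=k_1$ if $\gamma\le k_0F(k_0)+k_1(1-F(k_1))+t(F(k_1)-F(k_0))$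 and $k_0$ otherwise. The median individual $\mu$ has cost $\gamma_\mu$ with $F(\gamma_\mu)=\tfrac12$, and $k_\mu^*(t,F)=k^*(\gamma_\mu)$. *)

theory Defs
  imports "HOL-Analysis.Analysis"
begin

definition cost_dist :: "(real \<Rightarrow> real) \<Rightarrow> (real \<Rightarrow> real) \<Rightarrow> bool" where
  "cost_dist F f \<longleftrightarrow>
     mono F \<and> (F \<longlongrightarrow> 0) at_bot \<and> (F \<longlongrightarrow> 1) at_top \<and>
     (\<forall>x. (F has_real_derivative f x) (at x)) \<and> continuous_on UNIV f \<and>
     (\<forall>x. f x > 0) \<and> concave_on UNIV (\<lambda>x. ln (f x))"

definition rho :: "real \<Rightarrow> real \<Rightarrow> real \<Rightarrow> real" where
  "rho \<delta>1 \<delta>0 \<phi> = (\<delta>1 + \<delta>0 - 1) * (2 * \<phi> - 1)"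

definition payoff :: "(real \<Rightarrow> real) \<Rightarrow> real \<Rightarrow> real \<Rightarrow> real \<Rightarrow> real \<Rightarrow> real" where
  "payoff F t \<rho> r \<gamma> =
     (if \<gamma> \<le> r * \<rho> then - \<gamma> + r * \<rho> * (1 - F (r * \<rho>)) + t * F (r * \<rho>)
      else - r * \<rho> * F (r * \<rho>) + t * F (r * \<rho>))"

definition kstar :: "(real \<Rightarrow> real) \<Rightarrow> real \<Rightarrow> real \<Rightarrow> real \<Rightarrow> real \<Rightarrow> real" where
  "kstar F t k0 k1 \<gamma> =
     (if \<gamma> \<le> k0 * F k0 + k1 * (1 - F k1) + t * (F k1 - F k0) then k1 else k0)"

end

theory Submission
  imports Defs "HOL-Probability.Probability"
begin

text \<open>Writing \<open>k = r \<rho>\<close>, the payoff is the maximum of the non-complier's payoff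
\<open>(t - k) F k\<close> and the complier's payoff \<open>t + (k - t)(1 - F k) - \<gamma>\<close>. Log-concavity of
the density makes \<open>F/f\<close> nondecreasing and \<open>(1 - F)/f\<close> nonincreasing, so the first
term is maximised at \<open>k\<^sub>0\<close> and the second at \<open>k\<^sub>1\<close>. Hence every individual's
favourite reward is \<open>k\<^sup>*(\<gamma>)/\<rho>\<close>, and \<open>k\<^sup>*\<close> is a step function of \<open>\<gamma>\<close>: all individuals
on the median's side of the threshold share the median's favourite, and they form a
set of measure one half.\<close>

lemma concave_on_reflect:
  fixes g :: "real \<Rightarrow> real"
  assumes "concave_on UNIV g"
  shows "concave_on UNIV (\<lambda>x. g (- x))"
  unfolding concave_on_iff
proof (intro conjI ballI allI impI)
  fix x y u v :: real assume "0 \<le> u" "0 \<le> v" "u + v = 1"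
  then have "u * g (- x) + v * g (- y) \<le> g (u *\<^sub>R (- x) + v *\<^sub>R (- y))"
    using assms unfolding concave_on_iff by blast
  then show "u * g (- x) + v * g (- y) \<le> g (- (u *\<^sub>R x + v *\<^sub>R y))" by simp
qed simp

lemma concave_on_exchange:
  fixes g :: "real \<Rightarrow> real"
  assumes "concave_on UNIV g" and "x \<le> y" and "s \<ge> 0"
  shows "g (x - s) + g y \<le> g x + g (y - s)"
proof (cases "s = 0")
  case False
  define l where "l = s / (y - x + s)"
  have l: "0 \<le> l" "l \<le> 1" and ls: "l * (y - x + s) = s"
    using assms False by (auto simp: l_def field_simps)
  \<comment> \<open>\<open>x = (1 - l) (x - s) + l y\<close> and \<open>y - s = l (x - s) + (1 - l) y\<close>\<close>
  have "(1 - l) * g (x - s) + l * g y \<le> g x"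
    using concave_onD[OF assms(1) l, of "x - s" y] ls by (simp add: algebra_simps)
  moreover have "l * g (x - s) + (1 - l) * g y \<le> g (y - s)"
    using concave_onD[OF assms(1) l, of y "x - s"] ls by (simp add: algebra_simps)
  ultimately show ?thesis by (simp add: algebra_simps)
qed simp

lemma log_concave_exchange:
  fixes f :: "real \<Rightarrow> real"
  assumes pos: "\<And>x. f x > 0" and lc: "concave_on UNIV (\<lambda>x. ln (f x))"
    and "x \<le> y" and "s \<ge> 0"
  shows "f (x - s) * f y \<le> f x * f (y - s)"
proof -
  have "ln (f (x - s)) + ln (f y) \<le> ln (f x) + ln (f (y - s))"
    using concave_on_exchange[OF lc assms(3,4)] .
  then have "exp (ln (f (x - s)) + ln (f y)) \<le> exp (ln (f x) + ln (f (y - s)))"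
    by simp
  then show ?thesis using pos by (simp add: exp_add)
qed

lemma cdf_density_ratio_mono:
  fixes F f :: "real \<Rightarrow> real"
  assumes der: "\<And>x. (F has_real_derivative f x) (at x)" and pos: "\<And>x. f x > 0"
    and lc: "concave_on UNIV (\<lambda>x. ln (f x))" and bot: "(F \<longlongrightarrow> 0) at_bot"
    and "x \<le> y"
  shows "F x * f y \<le> F y * f x"
proof -
  define P where "P u = f x * F (y - u) - f y * F (x - u)" for u
  have dP: "(P has_real_derivative (f y * f (x - u) - f x * f (y - u))) (at u)" for u
    unfolding P_def by (auto intro!: derivative_eq_intros DERIV_chain2[OF der])
  have P_decreasing: "P u \<le> P 0" if "u \<ge> 0" for u
  proof (rule DERIV_nonpos_imp_nonincreasing[OF that])
    fix z :: real assume "0 \<le> z"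
    then show "\<exists>d. (P has_real_derivative d) (at z) \<and> d \<le> 0"
      using dP[of z] log_concave_exchange[OF pos lc \<open>x \<le> y\<close>, of z]
      by (intro exI[of _ "f y * f (x - z) - f x * f (y - z)"]) (simp add: mult.commute)
  qed
  have "filterlim (\<lambda>u::real. c - u) at_bot at_top" for c
    using filterlim_tendsto_add_at_bot_iff[of "\<lambda>_. c" c at_top uminus]
      filterlim_uminus_at_bot_at_top by simp
  then have "(P \<longlongrightarrow> f x * 0 - f y * 0) at_top"
    unfolding P_def by (intro tendsto_intros filterlim_compose[OF bot])
  then have "(P \<longlongrightarrow> 0) at_top" by simp
  then have "0 \<le> P 0"
    by (rule tendsto_upperbound) (auto intro!: P_decreasing simp: eventually_at_top_linorder)
  then show ?thesis by (simp add: P_def mult.commute)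
qed

lemma linear_times_cdf_max:
  fixes F f :: "real \<Rightarrow> real"
  assumes der: "\<And>x. (F has_real_derivative f x) (at x)" and pos: "\<And>x. f x > 0"
    and lc: "concave_on UNIV (\<lambda>x. ln (f x))" and bot: "(F \<longlongrightarrow> 0) at_bot"
    and k0: "k0 = t - F k0 / f k0"
  shows "(t - k) * F k \<le> (t - k0) * F k0"
proof -
  define G where "G k = (t - k) * F k" for k
  have dG: "(G has_real_derivative (t - k - F k / f k) * f k) (at k)" for k
    unfolding G_def using pos[of k]
    by (auto intro!: derivative_eq_intros der simp: field_simps)
  \<comment> \<open>the first factor of \<open>G'\<close> is strictly decreasing and vanishes at \<open>k0\<close>\<close>
  have ratio_mono: "F a / f a \<le> F b / f b" if "a \<le> b" for a b
    using cdf_density_ratio_mono[OF der pos lc bot that] pos[of a] pos[of b]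
    by (simp add: divide_simps mult.commute)
  have "G k \<le> G k0"
  proof (cases "k \<le> k0")
    case True
    show ?thesis
    proof (rule DERIV_nonneg_imp_nondecreasing[OF True])
      fix z assume "k \<le> z" "z \<le> k0"
      then have "0 \<le> t - z - F z / f z" using ratio_mono[of z k0] k0 by linarith
      then show "\<exists>d. (G has_real_derivative d) (at z) \<and> d \<ge> 0"
        using dG[of z] pos[of z] by (intro exI[of _ "(t - z - F z / f z) * f z"]) simp
    qed
  next
    case False
    then have "k0 \<le> k" by simp
    then show ?thesis
    proof (rule DERIV_nonpos_imp_nonincreasing)
      fix z assume "k0 \<le> z" "z \<le> k"
      then have "t - z - F z / f z \<le> 0" using ratio_mono[of k0 z] k0 by linarith
      then show "\<exists>d. (G has_real_derivative d) (at z) \<and> d \<le> 0"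
        using dG[of z] pos[of z]
        by (intro exI[of _ "(t - z - F z / f z) * f z"]) (simp add: mult_nonpos_nonneg)
    qed
  qed
  then show ?thesis by (simp add: G_def)
qed

lemma linear_times_survival_max:
  fixes F f :: "real \<Rightarrow> real"
  assumes der: "\<And>x. (F has_real_derivative f x) (at x)" and pos: "\<And>x. f x > 0"
    and lc: "concave_on UNIV (\<lambda>x. ln (f x))" and top: "(F \<longlongrightarrow> 1) at_top"
    and k1: "k1 = t + (1 - F k1) / f k1"
  shows "(k - t) * (1 - F k) \<le> (k1 - t) * (1 - F k1)"
proof -
  have der': "((\<lambda>x. 1 - F (- x)) has_real_derivative f (- x)) (at x)" for x
    by (auto intro!: derivative_eq_intros DERIV_chain2[OF der])
  have "((\<lambda>x. 1 - F (- x)) \<longlongrightarrow> 1 - 1) at_bot"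
    by (intro tendsto_intros filterlim_compose[OF top filterlim_uminus_at_top_at_bot])
  then have bot': "((\<lambda>x. 1 - F (- x)) \<longlongrightarrow> 0) at_bot" by simp
  have k1': "- k1 = - t - (1 - F (- (- k1))) / f (- (- k1))"
    using k1 by simp
  \<comment> \<open>the reflected distribution \<open>x \<mapsto> 1 - F (- x)\<close> turns this into the previous lemma\<close>
  have "(- t - (- k)) * (1 - F (- (- k))) \<le> (- t - (- k1)) * (1 - F (- (- k1)))"
    by (rule linear_times_cdf_max[of "\<lambda>x. 1 - F (- x)" "\<lambda>x. f (- x)",
          OF der' pos concave_on_reflect[OF lc] bot' k1'])
  then show ?thesis by (simp add: algebra_simps)
qed

lemma payoff_eq_max:
  "payoff F t \<rho> r \<gamma> =
     max ((t - r * \<rho>) * F (r * \<rho>)) (t + (r * \<rho> - t) * (1 - F (r * \<rho>)) - \<gamma>)"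
  unfolding payoff_def by (auto simp: algebra_simps max_def)

lemma closed_payoff_le: "closed {\<gamma>. payoff F t \<rho> r \<gamma> \<le> payoff F t \<rho> r' \<gamma>}"
  unfolding payoff_eq_max by (intro closed_Collect_le continuous_intros)

lemma payoff_le_kstar:
  assumes cd: "cost_dist F f" and "\<rho> \<noteq> 0"
    and k0: "k0 = t - F k0 / f k0" and k1: "k1 = t + (1 - F k1) / f k1"
  shows "payoff F t \<rho> r \<gamma> \<le> payoff F t \<rho> (kstar F t k0 k1 \<gamma> / \<rho>) \<gamma>"
proof -
  have der: "\<And>x. (F has_real_derivative f x) (at x)" and pos: "\<And>x. f x > 0"
    and lc: "concave_on UNIV (\<lambda>x. ln (f x))"
    and bot: "(F \<longlongrightarrow> 0) at_bot" and top: "(F \<longlongrightarrow> 1) at_top"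
    using cd by (auto simp: cost_dist_def)
  let ?G = "\<lambda>k. (t - k) * F k" and ?H = "\<lambda>k. t + (k - t) * (1 - F k)"
  have G: "?G (r * \<rho>) \<le> ?G k0"
    by (rule linear_times_cdf_max[OF der pos lc bot k0])
  have H: "?H (r * \<rho>) \<le> ?H k1"
    using linear_times_survival_max[OF der pos lc top k1] by simp
  have payoff_at: "payoff F t \<rho> (k / \<rho>) \<gamma> = max (?G k) (?H k - \<gamma>)" for k
    using \<open>\<rho> \<noteq> 0\<close> by (simp add: payoff_eq_max)
  \<comment> \<open>the threshold in \<open>kstar\<close> is the difference of the two maxima\<close>
  have threshold: "k0 * F k0 + k1 * (1 - F k1) + t * (F k1 - F k0) = ?H k1 - ?G k0"
    by (simp add: algebra_simps)
  show ?thesis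
  proof (cases "\<gamma> \<le> ?H k1 - ?G k0")
    case True
    then have "payoff F t \<rho> r \<gamma> \<le> ?H k1 - \<gamma>"
      using G H by (simp add: payoff_eq_max)
    also have "\<dots> \<le> payoff F t \<rho> (kstar F t k0 k1 \<gamma> / \<rho>) \<gamma>"
      using True by (simp add: kstar_def threshold payoff_at)
    finally show ?thesis .
  next
    case False
    then have "payoff F t \<rho> r \<gamma> \<le> ?G k0"
      using G H by (simp add: payoff_eq_max)
    also have "\<dots> \<le> payoff F t \<rho> (kstar F t k0 k1 \<gamma> / \<rho>) \<gamma>"
      using False by (simp add: kstar_def threshold payoff_at)
    finally show ?thesis .
  qed
qed

lemma kstar_constant_on_half_line:
  "\<exists>A \<in> {{..\<gamma>\<mu>}, {\<gamma>\<mu><..}}. \<forall>\<gamma>\<in>A. kstar F t k0 k1 \<gamma> = kstar F t k0 k1 \<gamma>\<mu>"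
  by (cases "\<gamma>\<mu> \<le> k0 * F k0 + k1 * (1 - F k1) + t * (F k1 - F k0)") (auto simp: kstar_def)

lemma interval_measure_cost_dist:
  assumes "cost_dist F f"
  shows "real_distribution (interval_measure F)"
    and "measure (interval_measure F) {..a} = F a"
    and "measure (interval_measure F) {a<..} = 1 - F a"
proof -
  have mono: "mono F" and der: "\<And>x. (F has_real_derivative f x) (at x)"
    and bot: "(F \<longlongrightarrow> 0) at_bot" and top: "(F \<longlongrightarrow> 1) at_top"
    using assms by (auto simp: cost_dist_def)
  have mono': "\<And>x y. x \<le> y \<Longrightarrow> F x \<le> F y"
    using mono by (simp add: monoD)
  have cont: "continuous (at_right a) F" for a
    using DERIV_isCont[OF der[of a]] by (simp add: continuous_at_imp_continuous_at_within)
  show distr: "real_distribution (interval_measure F)"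
    by (rule real_distribution_interval_measure[OF mono' cont bot top])
  show Iic: "measure (interval_measure F) {..a} = F a" for a
    by (rule measure_interval_measure_Iic[OF mono' cont bot])
  interpret real_distribution "interval_measure F" by (rule distr)
  have "{a<..} = space (interval_measure F) - {..a}" by auto
  then show "measure (interval_measure F) {a<..} = 1 - F a"
    using prob_compl[of "{..a}"] Iic by simp
qed

theorem proposition7:
  fixes F f :: "real \<Rightarrow> real" and \<delta>1 \<delta>0 \<phi> t k0 k1 \<gamma>\<mu> :: real
  assumes "cost_dist F f"
    and "0 \<le> \<delta>1" "\<delta>1 \<le> 1" "0 \<le> \<delta>0" "\<delta>0 \<le> 1"
    and "rho \<delta>1 \<delta>0 \<phi> \<noteq> 0"
    and "t \<ge> 0"
    and "1/2 < \<phi>" "\<phi> \<le> 1"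
    and "k0 = t - F k0 / f k0"
    and "k1 = t + (1 - F k1) / f k1"
    and "F \<gamma>\<mu> = 1/2"
  shows "\<forall>r. r \<noteq> kstar F t k0 k1 \<gamma>\<mu> / rho \<delta>1 \<delta>0 \<phi> \<longrightarrow>
           measure (interval_measure F)
             {\<gamma>. payoff F t (rho \<delta>1 \<delta>0 \<phi>) r \<gamma>
                 \<le> payoff F t (rho \<delta>1 \<delta>0 \<phi>) (kstar F t k0 k1 \<gamma>\<mu> / rho \<delta>1 \<delta>0 \<phi>) \<gamma>}
           \<ge> 1/2"
proof (intro allI impI)
  fix r
  let ?\<rho> = "rho \<delta>1 \<delta>0 \<phi>" and ?k = "kstar F t k0 k1" and ?M = "interval_measure F"
  let ?S = "{\<gamma>. payoff F t ?\<rho> r \<gamma> \<le> payoff F t ?\<rho> (?k \<gamma>\<mu> / ?\<rho>) \<gamma>}"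
  interpret real_distribution ?M
    by (rule interval_measure_cost_dist(1)[OF assms(1)])
  obtain A where A: "A \<in> {{..\<gamma>\<mu>}, {\<gamma>\<mu><..}}" and same_kstar: "\<forall>\<gamma>\<in>A. ?k \<gamma> = ?k \<gamma>\<mu>"
    using kstar_constant_on_half_line[of \<gamma>\<mu> F t k0 k1] by blast
  have "A \<subseteq> ?S"
  proof
    fix \<gamma> assume "\<gamma> \<in> A"
    then have "?k \<gamma> = ?k \<gamma>\<mu>" using same_kstar by blast
    moreover have "payoff F t ?\<rho> r \<gamma> \<le> payoff F t ?\<rho> (?k \<gamma> / ?\<rho>) \<gamma>"
      by (rule payoff_le_kstar[OF assms(1,6,10,11)])
    ultimately show "\<gamma> \<in> ?S" by simp
  qed
  moreover have "?S \<in> sets ?M"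
    by (simp add: borel_closed closed_payoff_le)
  ultimately have "measure ?M A \<le> measure ?M ?S"
    by (rule finite_measure_mono)
  moreover have "measure ?M A = 1/2"
    using A interval_measure_cost_dist(2,3)[OF assms(1)] assms(12) by auto
  ultimately show "measure ?M ?S \<ge> 1/2" by simp
qed

end
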